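(* Let $A[0],\dots,A[m-1]$ and $B[0],\dots,B[n-1]$ be arrays of elements whose keys are totally preordered by $\leq$, each array sorted so that $A[j-1]\leq A[j]$ for $1\leq j<m$ and $B[k-1]\leq B[k]$ for $1\leq k<n$. Let $C=\mathsf{stable\_merge}(A,B,\leq)$. Then for every $i$ with $0\leq i<m+n$ there exist a unique $j$ with $0\leq j\leq m$ and a unique $k$ with $0\leq k\leq n$ such that $j+k=i$ and (1) $j=0$ or $A[j-1]\leq B[k]$, and (2) $k=0$ or $B[k-1]<A[j]$. Moreover these $j,k$ satisfy $\mathsf{stable\_merge}(A[0,\ldots,j-1],B[0,\ldots,k-1],\leq)=C[0,\ldots,i-1]$.
   Context: Arrays are indexed from $0$. By convention $A[-1]=B[-1]=-\infty$ and $A[m]=B[n]=+\infty$ (sentinels, not stored), so that expressions such as $A[m]$ or $B[n]$ in the conditions are meaningful. $\mathsf{stable\_merge}(X,Y,\leq)$ denotes the sorted (with respect to $\leq$ on keys) sequence consisting of all elements of $X$ and $Y$ in which the relative order of elements is stable: elements of $X$ keep their relative order, elements of $Y$ keep their relative order, and whenever an element of $X$ and an element of $Y$ have equal keys, the element of $X$ comes first. For an output position $i$, the indices $j,k$ are called the co-ranks of the rank $i$. *)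

theory Defs
  imports Main
begin

fun stable_merge :: "'a list \<Rightarrow> 'a list \<Rightarrow> ('a \<Rightarrow> 'a \<Rightarrow> bool) \<Rightarrow> 'a list" where
  "stable_merge [] ys le = ys"
| "stable_merge xs [] le = xs"
| "stable_merge (x # xs) (y # ys) le =
     (if le x y then x # stable_merge xs (y # ys) le
      else y # stable_merge (x # xs) ys le)"

end

theory Submission
  imports Defs
begin

text \<open>Existence of the co-ranks follows by induction along the recursion of the merge:
the first output element comes from A or from B, and the co-ranks of the remaining prefix
of the output are shifted by one in the corresponding list. For uniqueness, if j < j' were
both admissible for the same rank, then k' < k and sortedness would give
A[j] \<le> A[j'-1] \<le> B[k'] \<le> B[k-1], contradicting B[k-1] < A[j].\<close>

text \<open>The disjuncts j = 0 and k = length B (resp. k = 0 and j = length A) stand for the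
sentinels A[-1] = -\<infinity> and B[n] = +\<infinity> (resp. B[-1] = -\<infinity> and A[m] = +\<infinity>).\<close>

definition coranks :: "('a \<Rightarrow> 'a \<Rightarrow> bool) \<Rightarrow> 'a list \<Rightarrow> 'a list \<Rightarrow> nat \<Rightarrow> nat \<Rightarrow> bool" where
  "coranks le A B j k \<longleftrightarrow> j \<le> length A \<and> k \<le> length B \<and>
     (j = 0 \<or> k = length B \<or> le (A ! (j - 1)) (B ! k)) \<and>
     (k = 0 \<or> j = length A \<or> \<not> le (A ! j) (B ! (k - 1)))"

lemma sorted_wrt_nth_le:
  assumes "reflp le" "sorted_wrt le xs" "i \<le> j" "j < length xs"
  shows "le (xs ! i) (xs ! j)"
  using assms by (cases "i = j") (auto simp: reflpD sorted_wrt_nth_less)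

lemma sorted_wrt_if_adjacent:
  assumes "transp le" and "\<forall>j. 1 \<le> j \<and> j < length xs \<longrightarrow> le (xs ! (j - 1)) (xs ! j)"
  shows "sorted_wrt le xs"
  unfolding sorted_wrt_iff_nth_Suc_transp[OF assms(1)]
proof (intro allI impI)
  fix i assume "Suc i < length xs"
  then show "le (xs ! i) (xs ! Suc i)" using assms(2) by (metis diff_Suc_1 le_add1 plus_1_eq_Suc)
qed

lemma stable_merge_Nil2 [simp]: "stable_merge xs [] le = xs"
  by (cases xs) auto

lemma coranks_Cons_left:
  assumes "coranks le xs B j k" and "j = 0 \<Longrightarrow> k = length B \<or> le x (B ! k)"
  shows "coranks le (x # xs) B (Suc j) k"
  using assms by (cases j) (auto simp: coranks_def)

lemma coranks_Cons_right:
  assumes "coranks le A ys j k" and "k = 0 \<Longrightarrow> j = length A \<or> \<not> le (A ! j) y"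
  shows "coranks le A (y # ys) j (Suc k)"
  using assms by (cases k) (auto simp: coranks_def)

lemma coranks_exist:
  assumes "reflp le" "transp le" "sorted_wrt le A" "sorted_wrt le B"
    and "i \<le> length A + length B"
  shows "\<exists>j k. j + k = i \<and> coranks le A B j k \<and>
           stable_merge (take j A) (take k B) le = take i (stable_merge A B le)"
  using assms
proof (induction A B le arbitrary: i rule: stable_merge.induct)
  case (1 ys le)
  then show ?case by (intro exI[of _ 0] exI[of _ i]) (auto simp: coranks_def)
next
  case (2 x xs le)
  then show ?case by (intro exI[of _ i] exI[of _ 0]) (auto simp: coranks_def)
next
  case (3 x xs y ys le)
  show ?case
  proof (cases i)
    case 0
    then show ?thesis by (intro exI[of _ 0] exI[of _ 0]) (auto simp: coranks_def)
  next
    case (Suc i')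
    show ?thesis
    proof (cases "le x y")
      case True
      obtain j k where jk: "j + k = i'" "coranks le xs (y # ys) j k"
        and merge: "stable_merge (take j xs) (take k (y # ys)) le
                      = take i' (stable_merge xs (y # ys) le)"
        using "3.IH"(1)[OF True, of i'] "3.prems" Suc by auto
      have "le x ((y # ys) ! k)" if "k < length (y # ys)"
      proof -
        have "le y ((y # ys) ! k)"
          using sorted_wrt_nth_le[OF \<open>reflp le\<close> \<open>sorted_wrt le (y # ys)\<close>, of 0 k] that by simp
        with True show ?thesis by (rule transpD[OF \<open>transp le\<close>])
      qed
      moreover have "k \<le> length (y # ys)" using jk(2) by (simp add: coranks_def)
      ultimately have "k = length (y # ys) \<or> le x ((y # ys) ! k)"
        by (cases "k < length (y # ys)") auto
      with jk(2) have "coranks le (x # xs) (y # ys) (Suc j) k"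
        by (rule coranks_Cons_left)
      moreover have "stable_merge (x # take j xs) (take k (y # ys)) le
                       = x # stable_merge (take j xs) (take k (y # ys)) le"
        using True by (cases k) auto
      ultimately show ?thesis
        using jk(1) merge True Suc by (intro exI[of _ "Suc j"] exI[of _ k]) auto
    next
      case False
      obtain j k where jk: "j + k = i'" "coranks le (x # xs) ys j k"
        and merge: "stable_merge (take j (x # xs)) (take k ys) le
                      = take i' (stable_merge (x # xs) ys le)"
        using "3.IH"(2)[OF False, of i'] "3.prems" Suc by auto
      have "\<not> le ((x # xs) ! j) y" if "j < length (x # xs)"
      proof
        assume "le ((x # xs) ! j) y"
        have "le x ((x # xs) ! j)"
          using sorted_wrt_nth_le[OF \<open>reflp le\<close> \<open>sorted_wrt le (x # xs)\<close>, of 0 j] that by simp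
        then have "le x y" using \<open>le ((x # xs) ! j) y\<close> by (rule transpD[OF \<open>transp le\<close>])
        with False show False ..
      qed
      moreover have "j \<le> length (x # xs)" using jk(2) by (simp add: coranks_def)
      ultimately have "j = length (x # xs) \<or> \<not> le ((x # xs) ! j) y"
        by (cases "j < length (x # xs)") auto
      with jk(2) have "coranks le (x # xs) (y # ys) j (Suc k)"
        by (rule coranks_Cons_right)
      moreover have "stable_merge (take j (x # xs)) (y # take k ys) le
                       = y # stable_merge (take j (x # xs)) (take k ys) le"
        using False by (cases j) auto
      ultimately show ?thesis
        using jk(1) merge False Suc by (intro exI[of _ j] exI[of _ "Suc k"]) auto
    qed
  qed
qed

lemma coranks_not_less:
  assumes "reflp le" "transp le" "sorted_wrt le A" "sorted_wrt le B"
    and "coranks le A B j k" "coranks le A B j' k'" "j + k = j' + k'"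
  shows "\<not> j < j'"
proof
  assume "j < j'"
  moreover have "j \<le> length A" "k \<le> length B" "j' \<le> length A" "k' \<le> length B"
    using assms(5,6) by (simp_all add: coranks_def)
  ultimately have bounds: "j \<le> j' - 1" "j' - 1 < length A" "k' \<le> k - 1" "k - 1 < length B"
    and nonsentinel: "0 < j'" "j < length A" "0 < k" "k' < length B"
    using assms(7) by linarith+
  from nonsentinel assms(5,6) have gt: "\<not> le (A ! j) (B ! (k - 1))" and le: "le (A ! (j' - 1)) (B ! k')"
    by (auto simp: coranks_def)
  have "le (A ! j) (B ! k')"
    using sorted_wrt_nth_le[OF assms(1,3) bounds(1,2)] le by (rule transpD[OF assms(2)])
  then have "le (A ! j) (B ! (k - 1))"
    using sorted_wrt_nth_le[OF assms(1,4) bounds(3,4)] by (rule transpD[OF assms(2)])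
  with gt show False ..
qed

lemma coranks_unique:
  assumes "reflp le" "transp le" "sorted_wrt le A" "sorted_wrt le B"
    and "coranks le A B j k" "coranks le A B j' k'" "j + k = j' + k'"
  shows "j = j' \<and> k = k'"
  using coranks_not_less[OF assms] coranks_not_less[OF assms(1-4,6,5) assms(7)[symmetric]]
    assms(7) by auto

theorem lemma1:
  fixes le :: "'a \<Rightarrow> 'a \<Rightarrow> bool" and A B C :: "'a list" and m n i :: nat
  assumes total: "\<forall>x y. le x y \<or> le y x"
    and trans: "\<forall>x y z. le x y \<longrightarrow> le y z \<longrightarrow> le x z"
    and mA: "length A = m" and nB: "length B = n"
    and sortedA: "\<forall>j. 1 \<le> j \<and> j < m \<longrightarrow> le (A ! (j - 1)) (A ! j)"
    and sortedB: "\<forall>k. 1 \<le> k \<and> k < n \<longrightarrow> le (B ! (k - 1)) (B ! k)"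
    and C: "C = stable_merge A B le"
    and i: "i < m + n"
  shows "(\<exists>!jk. case jk of (j, k) \<Rightarrow>
            j \<le> m \<and> k \<le> n \<and> j + k = i \<and>
            (j = 0 \<or> k = n \<or> le (A ! (j - 1)) (B ! k)) \<and>
            (k = 0 \<or> j = m \<or> \<not> le (A ! j) (B ! (k - 1))))
       \<and> (\<forall>j k. j \<le> m \<and> k \<le> n \<and> j + k = i \<and>
            (j = 0 \<or> k = n \<or> le (A ! (j - 1)) (B ! k)) \<and>
            (k = 0 \<or> j = m \<or> \<not> le (A ! j) (B ! (k - 1)))
            \<longrightarrow> stable_merge (take j A) (take k B) le = take i C)"
proof -
  have refl: "reflp le" by (rule reflpI) (use total in blast)
  have tr: "transp le" by (rule transpI) (use trans in blast)
  have sorted: "sorted_wrt le A" "sorted_wrt le B"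
    using sorted_wrt_if_adjacent[OF tr] sortedA sortedB mA nB by simp_all
  have "i \<le> length A + length B" using i mA nB by simp
  then obtain j0 k0 where ex: "j0 + k0 = i" "coranks le A B j0 k0"
    and merge: "stable_merge (take j0 A) (take k0 B) le = take i C"
    using coranks_exist[OF refl tr sorted] unfolding C by blast
  have uniq: "j = j0 \<and> k = k0" if "coranks le A B j k" "j + k = i" for j k
    using coranks_unique[OF refl tr sorted that(1) ex(2)] that(2) ex(1) by simp
  have coranks_iff: "(j \<le> m \<and> k \<le> n \<and> j + k = i \<and>
            (j = 0 \<or> k = n \<or> le (A ! (j - 1)) (B ! k)) \<and>
            (k = 0 \<or> j = m \<or> \<not> le (A ! j) (B ! (k - 1))))
        \<longleftrightarrow> j + k = i \<and> coranks le A B j k" for j k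
    unfolding coranks_def mA nB by blast
  have "\<exists>!jk. case jk of (j, k) \<Rightarrow> j + k = i \<and> coranks le A B j k"
  proof (rule ex1I[of _ "(j0, k0)"])
    fix jk assume "case jk of (j, k) \<Rightarrow> j + k = i \<and> coranks le A B j k"
    then show "jk = (j0, k0)" by (cases jk) (use uniq in blast)
  qed (use ex in simp)
  moreover have "\<forall>j k. j + k = i \<and> coranks le A B j k
                   \<longrightarrow> stable_merge (take j A) (take k B) le = take i C"
    using merge uniq by blast
  ultimately show ?thesis
    by (simp only: coranks_iff)
qed

end
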